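(* Let $q\in\mathbb{C}$ with $q\neq 0,1$ and $q$ not a root of unity. Let $(L,\sigma,\theta^{*})$ be a (commutative) qsi field extension of $\mathbb{C}$. If a matrix $Y=(y_{ij})\in \mathrm{M}_2(L)$ satisfies \[ \sigma Y=\begin{bmatrix} q&0\\0&1\end{bmatrix}Y \quad\text{and}\quad \theta^{(1)}Y=\begin{bmatrix}0&1\\0&0\end{bmatrix}Y \] (with $\sigma,\theta^{(1)}$ applied entrywise), then $\det Y=0$.
   Context: Fix $q\in\mathbb{C}$, $q\neq0,1$, not a root of unity; put $[m]_q=1+q+\dots+q^{m-1}$ and $[m]_q!=[1]_q[2]_q\cdots[m]_q$. A qsi (q-SI $\sigma$-differential) algebra over $\mathbb{C}$ is a triple $(A,\sigma,\theta^{*})$ where $A$ is a $\mathbb{C}$-algebra, $\sigma:A\to A$ is a $\mathbb{C}$-algebra automorphism, $\theta^{*}=\{\theta^{(m)}\}_{m\in\mathbb{N}}$ is a family of $\mathbb{C}$-linear maps $A\to A$ with $\theta^{(0)}=\mathrm{Id}_A$, $\theta^{(m)}=\frac{1}{[m]_q!}(\theta^{(1)})^m$, and $\theta^{(1)}$ satisfies the twisted Leibniz rule $\theta^{(1)}(ab)=\theta^{(1)}(a)\,b+\sigma(a)\,\theta^{(1)}(b)$ and $\theta^{(1)}\circ\sigma=q\,\sigma\circ\theta^{(1)}$, with $\sigma$ and $\theta^{(1)}$ acting on $\mathbb{C}$ as the identity and zero respectively. A qsi field is a qsi algebra whose underlying ring is a commutative field. The model example is $\mathbb{C}(t)$ with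 $\sigma(f)(t)=f(qt)$ and $\theta^{(1)}f=\frac{f(qt)-f(t)}{(q-1)t}$. *)

theory Defs
  imports "HOL-Analysis.Analysis"
begin

definition q_int :: "complex \<Rightarrow> nat \<Rightarrow> complex" where
  "q_int q m = (\<Sum>i<m. q ^ i)"

definition q_fact :: "complex \<Rightarrow> nat \<Rightarrow> complex" where
  "q_fact q m = (\<Prod>k\<in>{1..m}. q_int q k)"

text \<open>A commutative field L, viewed as a field extension of the complex numbers via
  the ring homomorphism iota, together with a qsi structure (sigma, theta).
  The complex-scalar action on L is  c . a = iota c * a.\<close>
definition qsi_field :: "complex \<Rightarrow> (complex \<Rightarrow> 'L::field) \<Rightarrow> ('L \<Rightarrow> 'L) \<Rightarrow> (nat \<Rightarrow> 'L \<Rightarrow> 'L) \<Rightarrow> bool" where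
  "qsi_field q \<iota> \<sigma> \<theta> \<longleftrightarrow>
     \<comment> \<open>iota is a ring homomorphism C -> L (making L a C-algebra / field extension of C)\<close>
     (\<forall>a b. \<iota> (a + b) = \<iota> a + \<iota> b) \<and> (\<forall>a b. \<iota> (a * b) = \<iota> a * \<iota> b) \<and> \<iota> 1 = 1 \<and>
     \<comment> \<open>sigma is a C-algebra automorphism\<close>
     bij \<sigma> \<and> (\<forall>a b. \<sigma> (a + b) = \<sigma> a + \<sigma> b) \<and> (\<forall>a b. \<sigma> (a * b) = \<sigma> a * \<sigma> b) \<and>
     (\<forall>c. \<sigma> (\<iota> c) = \<iota> c) \<and>
     \<comment> \<open>theta 0 = Id, theta m = (theta 1)^m / [m]_q!\<close>
     \<theta> 0 = id \<and> (\<forall>m. \<theta> m = (\<lambda>a. inverse (\<iota> (q_fact q m)) * (\<theta> 1 ^^ m) a)) \<and>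
     \<comment> \<open>theta 1 is C-linear\<close>
     (\<forall>a b. \<theta> 1 (a + b) = \<theta> 1 a + \<theta> 1 b) \<and> (\<forall>c a. \<theta> 1 (\<iota> c * a) = \<iota> c * \<theta> 1 a) \<and>
     \<comment> \<open>twisted Leibniz rule\<close>
     (\<forall>a b. \<theta> 1 (a * b) = \<theta> 1 a * b + \<sigma> a * \<theta> 1 b) \<and>
     \<comment> \<open>theta 1 o sigma = q sigma o theta 1\<close>
     (\<forall>a. \<theta> 1 (\<sigma> a) = \<iota> q * \<sigma> (\<theta> 1 a)) \<and>
     \<comment> \<open>theta 1 vanishes on C\<close>
     (\<forall>c. \<theta> 1 (\<iota> c) = 0)"

definition mat2 :: "'a::zero \<Rightarrow> 'a \<Rightarrow> 'a \<Rightarrow> 'a \<Rightarrow> 'a^2^2" where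
  "mat2 a b c d = vector [vector [a, b], vector [c, d]]"

definition entrywise :: "('a \<Rightarrow> 'a) \<Rightarrow> 'a^'n^'m \<Rightarrow> 'a^'n^'m" where
  "entrywise f Y = (\<chi> i j. f (Y $ i $ j))"

end

theory Submission
  imports Defs
begin

text \<open>Write \<open>Y = [[a, b], [c, d]]\<close>. The equations say \<open>\<sigma> a = q a\<close>, \<open>\<sigma> b = q b\<close>,
  \<open>\<theta> a = c\<close> and \<open>\<theta> b = d\<close> for \<open>\<theta> = \<theta>\<^sup>(\<^sup>1\<^sup>)\<close>. Expanding \<open>\<theta> (a b) = \<theta> (b a)\<close> with the
  twisted Leibniz rule gives \<open>(1 - q) (a d - b c) = 0\<close>, and \<open>q \<noteq> 1\<close> still holds in \<open>L\<close>
  because the embedding \<open>\<complex> \<rightarrow> L\<close> is injective.\<close>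

lemma entrywise_nth [simp]: "entrywise f Y $ i $ j = f (Y $ i $ j)"
  by (simp add: entrywise_def)

lemma mat2_mult_nth:
  fixes Y :: "'a::comm_ring_1^'n^2"
  shows "(mat2 a b c d ** Y) $ 1 $ j = a * Y $ 1 $ j + b * Y $ 2 $ j"
    and "(mat2 a b c d ** Y) $ 2 $ j = c * Y $ 1 $ j + d * Y $ 2 $ j"
  by (simp_all add: matrix_matrix_mult_def mat2_def UNIV_2)

lemma twisted_derivation_commute:
  fixes D s :: "'a::comm_ring \<Rightarrow> 'a"
  assumes Leibniz: "\<And>x y. D (x * y) = D x * y + s x * D y"
  shows "(a - s a) * D b = (b - s b) * D a"
proof -
  have "D a * b + s a * D b = D b * a + s b * D a"
    using Leibniz[of a b] Leibniz[of b a] by (simp add: mult.commute)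
  then show ?thesis
    by (simp add: algebra_simps)
qed

lemma inj_field_hom:
  fixes \<iota> :: "'a::field \<Rightarrow> 'b::field"
  assumes add: "\<And>x y. \<iota> (x + y) = \<iota> x + \<iota> y"
    and mult: "\<And>x y. \<iota> (x * y) = \<iota> x * \<iota> y"
    and one: "\<iota> 1 = 1"
  shows "inj \<iota>"
proof (rule injI)
  fix x y
  assume "\<iota> x = \<iota> y"
  then have zero: "\<iota> (x - y) = 0"
    using add[of "x - y" y] by simp
  show "x = y"
  proof (rule ccontr)
    assume "x \<noteq> y"
    then have "\<iota> (x - y) * \<iota> (inverse (x - y)) = 1"
      by (simp flip: mult add: one)
    with zero show False
      by simp
  qed
qed

lemma qsi_field_inj:
  "qsi_field q \<iota> \<sigma> \<theta> \<Longrightarrow> inj \<iota>"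
  unfolding qsi_field_def by (intro inj_field_hom) auto

lemma qsi_field_twisted_Leibniz:
  "qsi_field q \<iota> \<sigma> \<theta> \<Longrightarrow> \<theta> 1 (x * y) = \<theta> 1 x * y + \<sigma> x * \<theta> 1 y"
  unfolding qsi_field_def by blast

theorem lemma1:
  fixes q :: complex and \<iota> :: "complex \<Rightarrow> 'L::field"
    and \<sigma> :: "'L \<Rightarrow> 'L" and \<theta> :: "nat \<Rightarrow> 'L \<Rightarrow> 'L" and Y :: "'L^2^2"
  assumes "q \<noteq> 0" and "q \<noteq> 1" and "\<forall>n>0. q ^ n \<noteq> 1"
    and "qsi_field q \<iota> \<sigma> \<theta>"
    and "entrywise \<sigma> Y = mat2 (\<iota> q) 0 0 1 ** Y"
    and "entrywise (\<theta> 1) Y = mat2 0 1 0 0 ** Y"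
  shows "det Y = 0"
proof -
  have \<sigma>_row1: "\<sigma> (Y $ 1 $ j) = \<iota> q * Y $ 1 $ j" for j
    using arg_cong[OF assms(5), of "\<lambda>M. M $ 1 $ j"] by (simp add: mat2_mult_nth)
  have \<theta>_row1: "\<theta> 1 (Y $ 1 $ j) = Y $ 2 $ j" for j
    using arg_cong[OF assms(6), of "\<lambda>M. M $ 1 $ j"] by (simp add: mat2_mult_nth)
  have "(Y $ 1 $ 1 - \<sigma> (Y $ 1 $ 1)) * \<theta> 1 (Y $ 1 $ 2)
      = (Y $ 1 $ 2 - \<sigma> (Y $ 1 $ 2)) * \<theta> 1 (Y $ 1 $ 1)"
    using assms(4) by (intro twisted_derivation_commute qsi_field_twisted_Leibniz)
  then have "(1 - \<iota> q) * det Y = 0"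
    unfolding \<sigma>_row1 \<theta>_row1 det_2 by (simp add: algebra_simps)
  moreover have "\<iota> q \<noteq> \<iota> 1"
    using qsi_field_inj[OF assms(4)] assms(2) by (metis injD)
  moreover have "\<iota> 1 = 1"
    using assms(4) unfolding qsi_field_def by blast
  ultimately show ?thesis
    by simp
qed

end
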